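(* Let $c\in(0,\infty)$, $\lambda_\pm=(1\pm c^{-1/2})^2$, and for $x>\lambda_+$ let $$\mathcal T(x)=\frac{x-(1+c^{-1})-\sqrt{(x-\lambda_+)(x-\lambda_-)}}{2c^{-1}}.$$ Let $d_1>d_2>\dots>d_s>c^{-1/4}$, $p(d)=\frac{(d^2+1)(d^2+c^{-1})}{d^2}$, $p_i=p(d_i)$, and $T^s(x)=\prod_{i=1}^s(\mathcal T(x)-d_i^{-2})$. Then: (1) the equation $T^s(x)=0$ ($x>\lambda_+$) has $s$ solutions, namely $p_1,\dots,p_s$; (2) $T^s$ has $s-1$ critical points $x_1,\dots,x_{s-1}$ with $x_i\in(p_{i+1},p_i)$, $i=1,\dots,s-1$; (3) $\mathcal T$ is strictly decreasing on $(\lambda_+,\infty)$.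
   Context: $\mathcal T(x)$ equals $x\,m_{1c}(x)m_{2c}(x)$, where $m_{1c},m_{2c}$ are the Stieltjes transforms of the limiting (Marchenko–Pastur) spectral distributions of $XX^*$ and $X^*X$ with aspect ratio $N/M\to c$. *)

theory Defs
  imports "HOL-Analysis.Analysis"
begin

definition lam_plus :: "real \<Rightarrow> real" where
  "lam_plus c = (1 + 1 / sqrt c)^2"

definition lam_minus :: "real \<Rightarrow> real" where
  "lam_minus c = (1 - 1 / sqrt c)^2"

definition calT :: "real \<Rightarrow> real \<Rightarrow> real" where
  "calT c x = (x - (1 + 1 / c) - sqrt ((x - lam_plus c) * (x - lam_minus c))) / (2 * (1 / c))"

definition pfun :: "real \<Rightarrow> real \<Rightarrow> real" where
  "pfun c d = (d^2 + 1) * (d^2 + 1 / c) / d^2"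

definition Ts :: "real \<Rightarrow> (nat \<Rightarrow> real) \<Rightarrow> nat \<Rightarrow> real \<Rightarrow> real" where
  "Ts c d s x = (\<Prod>i=1..s. calT c x - 1 / (d i)^2)"

end

theory Submission imports Defs "HOL-Computational_Algebra.Polynomial" begin

text \<open>
  On \<open>(\<lambda>\<^sub>+, \<infinity>)\<close> the function \<open>T\<close> has negative derivative and an explicit inverse
  \<open>t \<mapsto> 1/t + 1 + 1/c + t/c\<close> defined on \<open>(0, \<surd>c)\<close>, and \<open>p(d)\<close> is this inverse at \<open>d\<^sup>-\<^sup>2\<close>.
  Hence \<open>T\<^sup>s = P \<circ> T\<close> for the polynomial \<open>P(t) = \<Prod>(t - d\<^sub>i\<^sup>-\<^sup>2)\<close>: the zeros of \<open>T\<^sup>s\<close> are the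
  \<open>p\<^sub>i\<close>, and its critical points are the preimages of the critical points of \<open>P\<close>, which by
  Rolle's theorem and the degree bound are exactly one in each gap between consecutive roots.
\<close>

definition calT_inv :: "real \<Rightarrow> real \<Rightarrow> real" where
  "calT_inv c t = 1 / t + 1 + 1 / c + t / c"

lemma calT_calT_inv:
  assumes c: "0 < c" and t: "0 < t" "t < sqrt c"
  shows "lam_plus c < calT_inv c t" "calT c (calT_inv c t) = t"
proof -
  define b where "b = 1 / sqrt c"
  have b: "0 < b" "1 / c = b^2" "b * t < 1"
    using c t by (auto simp: b_def power_divide field_simps)
  have lam: "lam_plus c = 1 + 2 * b + b^2" "lam_minus c = 1 - 2 * b + b^2"
    by (simp_all add: lam_plus_def lam_minus_def b_def[symmetric] power2_eq_square algebra_simps)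
  have inv: "calT_inv c t = 1 / t + 1 + b^2 + t * b^2"
    by (simp add: calT_inv_def b(2)[symmetric])
  have plus: "calT_inv c t - lam_plus c = (1 - b * t)^2 / t"
    and minus: "calT_inv c t - lam_minus c = (1 + b * t)^2 / t"
    using t(1) unfolding inv lam by (simp_all add: field_simps power2_eq_square)
  have "0 < (1 - b * t)^2 / t"
    using b(3) t(1) by simp
  with plus show "lam_plus c < calT_inv c t" by simp
  have "sqrt ((calT_inv c t - lam_plus c) * (calT_inv c t - lam_minus c)) = (1 - (b * t)^2) / t"
  proof -
    have "(calT_inv c t - lam_plus c) * (calT_inv c t - lam_minus c) = ((1 - (b * t)^2) / t)^2"
      unfolding plus minus by (simp add: power2_eq_square field_simps)
    moreover have "0 \<le> (1 - (b * t)^2) / t"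
      using b t(1) by (simp add: abs_square_less_1 less_imp_le)
    ultimately show ?thesis by (metis abs_of_nonneg real_sqrt_abs)
  qed
  then show "calT c (calT_inv c t) = t"
    using b t(1) unfolding calT_def inv b(2) by (simp add: field_simps power2_eq_square)
qed

lemma calT_has_neg_derivative:
  assumes c: "0 < c" and x: "lam_plus c < x"
  obtains y where "(calT c has_real_derivative y) (at x)" "y < 0"
proof -
  define q where "q = (\<lambda>x. (x - lam_plus c) * (x - lam_minus c))"
  define q' where "q' = (x - lam_minus c) + (x - lam_plus c)"
  have lam: "lam_minus c < lam_plus c"
    using c by (simp add: lam_plus_def lam_minus_def power2_eq_square algebra_simps)
  have q_pos: "0 < q x"
    unfolding q_def using x lam by simp
  have "(calT c has_real_derivative (1 - inverse (sqrt (q x)) / 2 * q') / (2 * (1 / c))) (at x)"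
    unfolding calT_def q_def[symmetric] q'_def
    using q_pos by (auto intro!: derivative_eq_intros simp: q_def)
  moreover have "2 * sqrt (q x) < q'"
  proof -
    have "q'^2 - (2 * sqrt (q x))^2 = (lam_plus c - lam_minus c)^2"
      using q_pos unfolding q_def q'_def by (simp add: power2_eq_square algebra_simps)
    moreover have "0 < (lam_plus c - lam_minus c)^2"
      using lam by simp
    ultimately have "(2 * sqrt (q x))^2 < q'^2"
      by linarith
    then show ?thesis
      using x lam unfolding q'_def by (smt (verit) power2_less_imp_less)
  qed
  then have "(1 - inverse (sqrt (q x)) / 2 * q') / (2 * (1 / c)) < 0"
    using q_pos c by (simp add: field_simps)
  ultimately show ?thesis using that by blast
qed

lemma calT_strict_decreasing:
  assumes "0 < c" "lam_plus c < x" "x < y"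
  shows "calT c y < calT c x"
  using assms(3)
proof (rule DERIV_neg_imp_decreasing)
  fix z assume "x \<le> z" "z \<le> y"
  then have "lam_plus c < z" using assms(2) by linarith
  then show "\<exists>y. (calT c has_real_derivative y) (at z) \<and> y < 0"
    using calT_has_neg_derivative[OF assms(1)] by metis
qed

lemma calT_less_iff:
  assumes c: "0 < c" and x: "lam_plus c < x" and y: "lam_plus c < y"
  shows "calT c x < calT c y \<longleftrightarrow> y < x"
proof (cases x y rule: linorder_cases)
  case less
  then show ?thesis using calT_strict_decreasing[OF c x less] by auto
next
  case greater
  then show ?thesis using calT_strict_decreasing[OF c y greater] by auto
qed simp

lemma calT_eq_iff:
  assumes c: "0 < c" and x: "lam_plus c < x" and y: "lam_plus c < y"
  shows "calT c x = calT c y \<longleftrightarrow> x = y"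
proof (cases x y rule: linorder_cases)
  case less
  then show ?thesis using calT_strict_decreasing[OF c x less] by auto
next
  case greater
  then show ?thesis using calT_strict_decreasing[OF c y greater] by auto
qed simp

lemma calT_inv_strict_decreasing:
  assumes c: "0 < c" and t: "0 < t" "t < t'" "t' < sqrt c"
  shows "calT_inv c t' < calT_inv c t"
proof -
  have "lam_plus c < calT_inv c t" "lam_plus c < calT_inv c t'"
    and "calT c (calT_inv c t) = t" "calT c (calT_inv c t') = t'"
    using calT_calT_inv[OF c] t by auto
  with calT_less_iff[OF c] \<open>t < t'\<close> show ?thesis by metis
qed

lemma calT_preimage:
  assumes c: "0 < c" and A: "A \<subseteq> {0<..<sqrt c}"
  shows "{x. lam_plus c < x \<and> calT c x \<in> A} = calT_inv c ` A"
proof (intro set_eqI iffI)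
  fix x assume "x \<in> {x. lam_plus c < x \<and> calT c x \<in> A}"
  then have x: "lam_plus c < x" "calT c x \<in> A" by auto
  then have "calT c (calT_inv c (calT c x)) = calT c x" "lam_plus c < calT_inv c (calT c x)"
    using calT_calT_inv[OF c] A by auto
  then have "calT_inv c (calT c x) = x"
    using calT_eq_iff[OF c _ x(1)] by blast
  then show "x \<in> calT_inv c ` A" using x(2) by force
next
  fix x assume "x \<in> calT_inv c ` A"
  then obtain t where "t \<in> A" "x = calT_inv c t" by blast
  then show "x \<in> {x. lam_plus c < x \<and> calT c x \<in> A}"
    using calT_calT_inv[OF c, of t] A by auto
qed

lemma inj_on_calT_inv: "0 < c \<Longrightarrow> inj_on (calT_inv c) {0<..<sqrt c}"
  by (rule inj_on_inverseI[where g = "calT c"]) (simp add: calT_calT_inv)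

lemma pfun_eq_calT_inv: "d \<noteq> 0 \<Longrightarrow> pfun c d = calT_inv c (1 / d^2)"
  by (simp add: pfun_def calT_inv_def field_simps add_divide_distrib power2_eq_square)

lemma inverse_square_bounds:
  assumes c: "0 < c" and d: "c powr (-1/4) < d"
  shows "0 < 1 / d^2" "1 / d^2 < sqrt c"
proof -
  have "(c powr (-1/4))^2 = 1 / sqrt c"
    using c by (simp add: power2_eq_square powr_add[symmetric] powr_minus_divide powr_half_sqrt)
  moreover have "(c powr (-1/4))^2 < d^2"
    using c d by (intro power_strict_mono) auto
  ultimately have less: "1 / sqrt c < d^2" by simp
  moreover have "0 < 1 / sqrt c" using c by simp
  ultimately have "0 < d^2" by linarith
  then show "0 < 1 / d^2" by simp
  show "1 / d^2 < sqrt c"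
    using less \<open>0 < d^2\<close> c by (simp add: field_simps)
qed

lemma inverse_squares_strict_mono_on:
  fixes d :: "nat \<Rightarrow> real"
  assumes "\<And>i j. 1 \<le> i \<Longrightarrow> i < j \<Longrightarrow> j \<le> s \<Longrightarrow> d j < d i"
    and "\<And>i. i \<in> {1..s} \<Longrightarrow> 0 < d i"
  shows "strict_mono_on {1..s} (\<lambda>i. 1 / (d i)^2)"
proof (rule strict_mono_onI)
  fix i j assume "i \<in> {1..s}" "j \<in> {1..s}" "i < j"
  then have "0 < d j" "d j < d i" using assms by auto
  then show "1 / (d i)^2 < 1 / (d j)^2"
    by (intro divide_strict_left_mono power_strict_mono mult_pos_pos) auto
qed

lemma poly_prod_linear_eq_0_iff:
  "finite I \<Longrightarrow> poly (\<Prod>i\<in>I. [:- t i, 1:]) (z :: real) = 0 \<longleftrightarrow> z \<in> t ` I"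
  by (simp add: poly_prod image_iff)

text \<open>Rolle's theorem gives a critical point in each of the \<open>s - 1\<close> gaps between consecutive
  roots, and \<open>deg P' = s - 1\<close> allows no others.\<close>
lemma pderiv_prod_linear_roots_interlace:
  fixes t :: "nat \<Rightarrow> real"
  assumes s: "1 \<le> s" and t: "strict_mono_on {1..s} t"
  defines "P \<equiv> \<Prod>i=1..s. [:- t i, 1:]"
  obtains r where "{z. poly (pderiv P) z = 0} = r ` {1..<s}"
    "\<And>i. i \<in> {1..<s} \<Longrightarrow> t i < r i \<and> r i < t (Suc i)"
proof -
  have deg: "degree P = s"
    unfolding P_def by (subst degree_prod_sum_eq) auto
  then have P'_nz: "pderiv P \<noteq> 0"
    using s by (simp add: pderiv_eq_0_iff)
  have "\<exists>z. t i < z \<and> z < t (Suc i) \<and> poly (pderiv P) z = 0" if i: "i \<in> {1..<s}" for i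
  proof -
    have lt: "t i < t (Suc i)" using t i by (auto simp: strict_mono_on_def)
    have "poly P (t i) = 0" "poly P (t (Suc i)) = 0"
      using i by (auto simp: P_def poly_prod_linear_eq_0_iff)
    then obtain z where "t i < z" "z < t (Suc i)" "(\<lambda>v. poly (pderiv P) z * v) = (\<lambda>v. 0)"
      using Rolle_deriv[OF lt, of "poly P"] \<open>poly P (t i) = 0\<close> poly_DERIV[of P, unfolded has_field_derivative_def]
      by (fastforce intro: continuous_intros)
    then show ?thesis by (metis mult_1_right)
  qed
  then obtain r where r: "\<And>i. i \<in> {1..<s} \<Longrightarrow> t i < r i \<and> r i < t (Suc i) \<and> poly (pderiv P) (r i) = 0"
    by metis
  have r_mono: "strict_mono_on {1..<s} r"
  proof (rule strict_mono_onI)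
    fix i j assume ij: "i \<in> {1..<s}" "j \<in> {1..<s}" "i < j"
    have "r i < t (Suc i)" using r ij by blast
    also have "\<dots> \<le> t j"
      using ij by (intro strict_mono_on_leD[OF t]) auto
    also have "\<dots> < r j" using r ij by blast
    finally show "r i < r j" .
  qed
  have "r ` {1..<s} = {z. poly (pderiv P) z = 0}"
  proof (rule card_subset_eq)
    show "finite {z. poly (pderiv P) z = 0}"
      using poly_roots_finite[OF P'_nz] .
    show "r ` {1..<s} \<subseteq> {z. poly (pderiv P) z = 0}"
      using r by auto
    have "card {z. poly (pderiv P) z = 0} \<le> s - 1"
      using card_poly_roots_bound[OF P'_nz] deg degree_pderiv[of P] by simp
    moreover have "card (r ` {1..<s}) = s - 1"
      using card_image[OF strict_mono_on_imp_inj_on[OF r_mono]] by simp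
    ultimately show "card (r ` {1..<s}) = card {z. poly (pderiv P) z = 0}"
      using card_mono[OF \<open>finite _\<close> \<open>r ` {1..<s} \<subseteq> _\<close>] by linarith
  qed
  then show ?thesis
    using that r by (metis (no_types))
qed

lemma poly_comp_has_real_derivative_0_iff:
  assumes g: "(g has_real_derivative g') (at x)" and "g' \<noteq> 0"
  shows "((\<lambda>x. poly p (g x)) has_real_derivative 0) (at x) \<longleftrightarrow> poly (pderiv p) (g x) = 0"
proof -
  have D: "((\<lambda>x. poly p (g x)) has_real_derivative poly (pderiv p) (g x) * g') (at x)"
    using DERIV_chain2[OF poly_DERIV g] .
  show ?thesis
  proof
    assume "((\<lambda>x. poly p (g x)) has_real_derivative 0) (at x)"
    then have "poly (pderiv p) (g x) * g' = 0" using DERIV_unique[OF D] by blast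
    with \<open>g' \<noteq> 0\<close> show "poly (pderiv p) (g x) = 0" by simp
  qed (use D in simp)
qed

lemma calT_poly_critical_points:
  assumes c: "0 < c"
  shows "{x. lam_plus c < x \<and> ((\<lambda>x. poly p (calT c x)) has_real_derivative 0) (at x)}
         = {x. lam_plus c < x \<and> calT c x \<in> {z. poly (pderiv p) z = 0}}"
proof -
  have "((\<lambda>x. poly p (calT c x)) has_real_derivative 0) (at x) \<longleftrightarrow> poly (pderiv p) (calT c x) = 0"
    if "lam_plus c < x" for x
    using calT_has_neg_derivative[OF c that] poly_comp_has_real_derivative_0_iff
    by (metis less_irrefl)
  then show ?thesis by auto
qed

lemma calT_poly_zeros:
  assumes c: "0 < c" and "finite I" and t: "t ` I \<subseteq> {0<..<sqrt c}"
  shows "{x. lam_plus c < x \<and> poly (\<Prod>i\<in>I. [:- t i, 1:]) (calT c x) = 0} = calT_inv c ` t ` I"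
  using calT_preimage[OF c t] \<open>finite I\<close> by (simp add: poly_prod_linear_eq_0_iff)

lemma calT_poly_critical_points_interlace:
  assumes c: "0 < c" and s: "1 \<le> s"
    and t_mono: "strict_mono_on {1..s} t" and t_range: "t ` {1..s} \<subseteq> {0<..<sqrt c}"
  obtains xs where
    "{x. lam_plus c < x \<and> ((\<lambda>x. poly (\<Prod>i=1..s. [:- t i, 1:]) (calT c x)) has_real_derivative 0) (at x)}
       = xs ` {1..<s}"
    "\<And>i. i \<in> {1..<s} \<Longrightarrow> calT_inv c (t (Suc i)) < xs i \<and> xs i < calT_inv c (t i)"
proof -
  obtain r where r_roots: "{z. poly (pderiv (\<Prod>i=1..s. [:- t i, 1:])) z = 0} = r ` {1..<s}"
    and r_between: "\<And>i. i \<in> {1..<s} \<Longrightarrow> t i < r i \<and> r i < t (Suc i)"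
    using pderiv_prod_linear_roots_interlace[OF s t_mono] by blast
  have t_in: "t i \<in> {0<..<sqrt c}" if "i \<in> {1..s}" for i
    using t_range that by blast
  have r_bounds: "0 < r i \<and> r i < sqrt c" if i: "i \<in> {1..<s}" for i
  proof -
    have "t 1 \<le> t i" "t (Suc i) \<le> t s"
      using i by (auto intro: strict_mono_on_leD[OF t_mono])
    moreover have "t 1 \<in> {0<..<sqrt c}" "t s \<in> {0<..<sqrt c}"
      using s by (intro t_in, simp)+
    ultimately show ?thesis using r_between[OF i] by auto
  qed
  then have r_range: "r ` {1..<s} \<subseteq> {0<..<sqrt c}"
    by auto
  show ?thesis
  proof
    show "{x. lam_plus c < x \<and> ((\<lambda>x. poly (\<Prod>i=1..s. [:- t i, 1:]) (calT c x)) has_real_derivative 0) (at x)}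
          = (\<lambda>i. calT_inv c (r i)) ` {1..<s}"
      unfolding calT_poly_critical_points[OF c] r_roots calT_preimage[OF c r_range]
      by (simp add: image_image)
  next
    fix i assume i: "i \<in> {1..<s}"
    then have "t i \<in> {0<..<sqrt c}" "t (Suc i) \<in> {0<..<sqrt c}"
      by (intro t_in, simp)+
    then show "calT_inv c (t (Suc i)) < calT_inv c (r i) \<and> calT_inv c (r i) < calT_inv c (t i)"
      using r_between[OF i] r_bounds[OF i] by (auto intro: calT_inv_strict_decreasing[OF c])
  qed
qed

theorem lemma4p6:
  fixes c :: real and s :: nat and d :: "nat \<Rightarrow> real"
  assumes c_pos: "0 < c"
    and s_pos: "1 \<le> s"
    and d_dec: "\<And>i j. 1 \<le> i \<Longrightarrow> i < j \<Longrightarrow> j \<le> s \<Longrightarrow> d j < d i"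
    and d_low: "\<And>i. 1 \<le> i \<Longrightarrow> i \<le> s \<Longrightarrow> c powr (-1/4) < d i"
  shows "{x. lam_plus c < x \<and> Ts c d s x = 0} = (\<lambda>i. pfun c (d i)) ` {1..s}
         \<and> card ((\<lambda>i. pfun c (d i)) ` {1..s}) = s
         \<and> (\<exists>xs :: nat \<Rightarrow> real.
               {x. lam_plus c < x \<and> (Ts c d s has_real_derivative 0) (at x)} = xs ` {1..<s}
             \<and> (\<forall>i\<in>{1..<s}. pfun c (d (Suc i)) < xs i \<and> xs i < pfun c (d i)))
         \<and> (\<forall>x y. lam_plus c < x \<longrightarrow> x < y \<longrightarrow> calT c y < calT c x)"
proof -
  define t where "t i = 1 / (d i)^2" for i
  have d_pos: "0 < d i" if "i \<in> {1..s}" for i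
    using d_low[of i] that c_pos by (smt (verit) atLeastAtMost_iff powr_gt_zero)
  have t_range: "t ` {1..s} \<subseteq> {0<..<sqrt c}"
    using inverse_square_bounds[OF c_pos d_low] by (auto simp: t_def)
  have t_mono: "strict_mono_on {1..s} t"
    unfolding t_def using d_dec d_pos by (rule inverse_squares_strict_mono_on) auto
  have pfun_t: "pfun c (d i) = calT_inv c (t i)" if "i \<in> {1..s}" for i
    using d_pos[OF that] by (simp add: pfun_eq_calT_inv t_def)
  have pfun_image: "(\<lambda>i. pfun c (d i)) ` {1..s} = calT_inv c ` t ` {1..s}"
    unfolding image_image by (rule image_cong) (simp_all add: pfun_t)
  have Ts_eq: "Ts c d s = (\<lambda>x. poly (\<Prod>i=1..s. [:- t i, 1:]) (calT c x))"
    by (simp add: Ts_def t_def poly_prod fun_eq_iff)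
  have card: "card ((\<lambda>i. pfun c (d i)) ` {1..s}) = s"
    using pfun_image strict_mono_on_imp_inj_on[OF t_mono]
      inj_on_subset[OF inj_on_calT_inv[OF c_pos] t_range]
    by (simp add: card_image)
  have zeros: "{x. lam_plus c < x \<and> Ts c d s x = 0} = (\<lambda>i. pfun c (d i)) ` {1..s}"
    unfolding Ts_eq pfun_image by (rule calT_poly_zeros[OF c_pos _ t_range]) simp
  obtain xs where crit: "{x. lam_plus c < x \<and> (Ts c d s has_real_derivative 0) (at x)} = xs ` {1..<s}"
    and between: "\<And>i. i \<in> {1..<s} \<Longrightarrow> calT_inv c (t (Suc i)) < xs i \<and> xs i < calT_inv c (t i)"
    using calT_poly_critical_points_interlace[OF c_pos s_pos t_mono t_range, folded Ts_eq] by blast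
  have "pfun c (d (Suc i)) < xs i \<and> xs i < pfun c (d i)" if "i \<in> {1..<s}" for i
    using between[OF that] pfun_t[of i] pfun_t[of "Suc i"] that by simp
  then show ?thesis
    using zeros card crit calT_strict_decreasing[OF c_pos] by blast
qed

end
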